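(* Let $P\subseteq\mathbb{R}^d$ be finite. Suppose there is a point $\mathbf{p}=(p_1,\dots,p_d)\in P$ such that for each $i\in\{1,\dots,d\}$ either $p_i=\max\{q_i:\mathbf{q}\in P\}$ or $p_i=\min\{q_i:\mathbf{q}\in P\}$. Then $\mathbf{p}$ is a leaf node in every optimal Steiner tree of $P$.
   Context: For a finite set $P\subset\mathbb{R}^d$ (the terminals), a Steiner tree of $P$ is a tree whose vertex set is $P\cup S$ for some finite $S\subset\mathbb{R}^d$ (the Steiner points), with edge lengths the Euclidean distances between endpoints; its cost is the total edge length. An optimal Steiner tree is one of minimum cost. By convention, optimal Steiner trees contain no trivial Steiner points (Steiner points of degree $2$ that merely subdivide a straight segment). *)

theory Defs
  imports "HOL-Analysis.Analysis"
begin

definition graph_edges :: "'a set \<Rightarrow> 'a set set \<Rightarrow> bool" where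
  "graph_edges V E \<longleftrightarrow> (\<forall>e\<in>E. \<exists>x y. e = {x, y} \<and> x \<in> V \<and> y \<in> V \<and> x \<noteq> y)"

definition connected_in :: "'a set set \<Rightarrow> 'a \<Rightarrow> 'a \<Rightarrow> bool" where
  "connected_in E u v \<longleftrightarrow> (u, v) \<in> {(x, y). {x, y} \<in> E}\<^sup>*"

text \<open>A tree: finite, nonempty, connected, and acyclic (every edge is a bridge,
  i.e. its endpoints are disconnected once the edge is removed).\<close>
definition is_tree :: "'a set \<Rightarrow> 'a set set \<Rightarrow> bool" where
  "is_tree V E \<longleftrightarrow> finite V \<and> V \<noteq> {} \<and> graph_edges V E
     \<and> (\<forall>u\<in>V. \<forall>v\<in>V. connected_in E u v)
     \<and> (\<forall>x y. {x, y} \<in> E \<longrightarrow> \<not> connected_in (E - {{x, y}}) x y)"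

definition degree :: "'a set set \<Rightarrow> 'a \<Rightarrow> nat" where
  "degree E v = card {e \<in> E. v \<in> e}"

definition edge_length :: "('a::metric_space) set \<Rightarrow> real" where
  "edge_length e = (THE l. \<exists>x y. e = {x, y} \<and> l = dist x y)"

definition tree_cost :: "('a::metric_space) set set \<Rightarrow> real" where
  "tree_cost E = (\<Sum>e\<in>E. edge_length e)"

text \<open>A Steiner tree of \<open>P\<close>: a tree whose vertex set is \<open>P \<union> S\<close> for a finite
  set \<open>S\<close> of Steiner points (here: the finite vertex set \<open>V \<supseteq> P\<close>, \<open>S = V - P\<close>).\<close>
definition steiner_tree :: "('a::metric_space) set \<Rightarrow> 'a set \<Rightarrow> 'a set set \<Rightarrow> bool" where
  "steiner_tree P V E \<longleftrightarrow> P \<subseteq> V \<and> is_tree V E"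

definition trivial_steiner_point ::
  "('a::real_normed_vector) set \<Rightarrow> 'a set \<Rightarrow> 'a set set \<Rightarrow> 'a \<Rightarrow> bool" where
  "trivial_steiner_point P V E v \<longleftrightarrow> v \<in> V - P \<and> degree E v = 2 \<and>
     (\<exists>x y. {x, v} \<in> E \<and> {y, v} \<in> E \<and> x \<noteq> y \<and> v \<in> closed_segment x y)"

definition optimal_steiner_tree ::
  "('a::real_normed_vector) set \<Rightarrow> 'a set \<Rightarrow> 'a set set \<Rightarrow> bool" where
  "optimal_steiner_tree P V E \<longleftrightarrow> steiner_tree P V E
     \<and> (\<forall>V' E'. steiner_tree P V' E' \<longrightarrow> tree_cost E \<le> tree_cost E')
     \<and> (\<forall>v. \<not> trivial_steiner_point P V E v)"

end

(* If the extreme point p had two neighbours a and b in an optimal Steiner tree, clamp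
   everything coordinatewise to the bounding box of P. The clamp is 1-Lipschitz and fixes P,
   so applying it to the tree does not increase the cost; and since p is a corner of the box,
   the clamped neighbours a', b' are seen from p under an angle of at most 90 degrees. Replace
   the edges pa, pb by a star joining p, a', b' at a new point s: for such an angle a suitable
   s makes the star strictly shorter than |pa| + |pb|, and a spanning tree of the resulting
   connected graph is a cheaper Steiner tree of P, a contradiction. *)

theory Submission
  imports Defs
begin

section \<open>Trees and their cost\<close>

lemma edge_length_doubleton [simp]: "edge_length {x, y} = dist x y"
  unfolding edge_length_def
  by (rule the_equality) (auto simp: doubleton_eq_iff dist_commute)

lemma graph_edges_memD:
  assumes "graph_edges V E" "{x, y} \<in> E"
  shows "x \<in> V \<and> y \<in> V \<and> x \<noteq> y"
proof -
  obtain a b where "{x, y} = {a, b}" "a \<in> V" "b \<in> V" "a \<noteq> b"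
    using assms unfolding graph_edges_def by blast
  then show ?thesis
    by (auto simp: doubleton_eq_iff)
qed

lemma finite_edges_if_tree:
  assumes "is_tree V E"
  shows "finite E"
proof (rule finite_subset)
  show "E \<subseteq> Pow V"
    using assms unfolding is_tree_def graph_edges_def by force
  show "finite (Pow V)"
    using assms by (simp add: is_tree_def)
qed

lemma connected_in_refl: "connected_in E u u"
  by (simp add: connected_in_def)

lemma connected_in_edge: "{u, v} \<in> E \<Longrightarrow> connected_in E u v"
  by (auto simp: connected_in_def)

lemma connected_in_trans:
  "connected_in E u v \<Longrightarrow> connected_in E v w \<Longrightarrow> connected_in E u w"
  unfolding connected_in_def by (rule rtrancl_trans)

lemma connected_in_image:
  assumes "connected_in E u v"
    and "\<And>x y. {x, y} \<in> E \<Longrightarrow> connected_in E' (f x) (f y)"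
  shows "connected_in E' (f u) (f v)"
  using assms(1) unfolding connected_in_def
proof (induction rule: rtrancl_induct)
  case (step y z)
  then show ?case
    using assms(2)[of y z] by (auto simp: connected_in_def)
qed simp

lemma connected_in_sym: "connected_in E u v \<Longrightarrow> connected_in E v u"
proof -
  have "sym {(x, y). {x, y} \<in> E}"
    by (auto intro: symI simp: insert_commute)
  then show "connected_in E u v \<Longrightarrow> connected_in E v u"
    unfolding connected_in_def by (blast dest: sym_rtrancl symD)
qed

lemma connected_in_remove_cycle_edge:
  assumes "connected_in (E - {{x, y}}) x y" "connected_in E u v"
  shows "connected_in (E - {{x, y}}) u v"
proof -
  have "connected_in (E - {{x, y}}) w z" if "{w, z} \<in> E" for w z
  proof (cases "{w, z} = {x, y}")
    case True
    then show ?thesis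
      using assms(1) connected_in_sym by (auto simp: doubleton_eq_iff)
  qed (use that in \<open>auto intro: connected_in_edge\<close>)
  then show ?thesis
    using connected_in_image[OF assms(2), of _ id] by simp
qed

lemma spanning_tree_exists:
  assumes "finite E" "finite V" "V \<noteq> {}" "graph_edges V E"
    and "\<forall>u\<in>V. \<forall>v\<in>V. connected_in E u v"
  shows "\<exists>E'\<subseteq>E. is_tree V E'"
  using assms
proof (induction E rule: finite_psubset_induct)
  case (psubset E)
  show ?case
  proof (cases "\<forall>x y. {x, y} \<in> E \<longrightarrow> \<not> connected_in (E - {{x, y}}) x y")
    case True
    then show ?thesis
      using psubset.prems unfolding is_tree_def by blast
  next
    case False
    then obtain x y where xy: "{x, y} \<in> E" "connected_in (E - {{x, y}}) x y"
      by blast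
    have "graph_edges V (E - {{x, y}})"
      using psubset.prems(3) by (simp add: graph_edges_def)
    moreover have "\<forall>u\<in>V. \<forall>v\<in>V. connected_in (E - {{x, y}}) u v"
      using psubset.prems(4) connected_in_remove_cycle_edge[OF xy(2)] by blast
    ultimately show ?thesis
      using psubset.IH[of "E - {{x, y}}"] psubset.prems(1,2) xy(1) by blast
  qed
qed

lemma tree_cost_mono:
  assumes "finite E" "E' \<subseteq> E" "\<forall>e\<in>E. \<exists>x y. e = {x, y}"
  shows "tree_cost E' \<le> tree_cost E"
  unfolding tree_cost_def by (rule sum_mono2) (use assms in auto)

lemma tree_cost_insert_le:
  "finite E \<Longrightarrow> tree_cost (insert {x, y} E) \<le> dist x y + tree_cost E"
  by (simp add: tree_cost_def sum.insert_if)

lemma tree_cost_image_le: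
  assumes "finite E" "\<forall>e\<in>E. \<exists>x y. e = {x, y}" "\<forall>x y. dist (f x) (f y) \<le> dist x y"
  shows "tree_cost ((`) f ` E) \<le> tree_cost E"
proof -
  have "tree_cost ((`) f ` E) \<le> (\<Sum>e\<in>E. edge_length (f ` e))"
    unfolding tree_cost_def using assms(1,2) by (subst o_def[symmetric]) (rule sum_image_le, auto)
  also have "\<dots> \<le> tree_cost E"
    unfolding tree_cost_def using assms(2,3) by (intro sum_mono) auto
  finally show ?thesis .
qed

lemma tree_cost_remove_two_edges:
  assumes "finite E" "{p, a} \<in> E" "{p, b} \<in> E" "a \<noteq> b"
  shows "tree_cost (E - {{p, a}, {p, b}}) = tree_cost E - dist p a - dist p b"
  using assms by (simp add: tree_cost_def sum_diff doubleton_eq_iff)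

lemma steiner_tree_of_connected_graph:
  assumes "finite E" "finite V" "P \<subseteq> V" "V \<noteq> {}"
    and edges: "\<forall>e\<in>E. \<exists>x\<in>V. \<exists>y\<in>V. e = {x, y}"
    and conn: "\<forall>u\<in>V. \<forall>v\<in>V. connected_in E u v"
  shows "\<exists>E'. steiner_tree P V E' \<and> tree_cost E' \<le> tree_cost E"
proof -
  \<comment> \<open>\<open>E\<close> may contain singletons \<open>{x, x}\<close> (edges collapsed by a map); they are discarded.\<close>
  define E2 where "E2 = {e \<in> E. card e = 2}"
  have "graph_edges V E2"
    using edges unfolding graph_edges_def E2_def by fastforce
  have "connected_in E2 x y" if "{x, y} \<in> E" for x y
    using that by (cases "x = y") (auto simp: E2_def connected_in_refl intro: connected_in_edge)
  then have "\<forall>u\<in>V. \<forall>v\<in>V. connected_in E2 u v"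
    using conn connected_in_image[of E _ _ E2 id] by simp
  then obtain E' where "E' \<subseteq> E2" "is_tree V E'"
    using spanning_tree_exists[of E2 V] \<open>graph_edges V E2\<close> assms(1,2,4) by (auto simp: E2_def)
  moreover have "E2 \<subseteq> E"
    by (auto simp: E2_def)
  ultimately show ?thesis
    using tree_cost_mono[of E E'] assms(1,3) edges unfolding steiner_tree_def by blast
qed

lemma degree_pos_if_connected:
  assumes "finite E" "connected_in E p q" "p \<noteq> q"
  shows "0 < degree E p"
proof -
  obtain y where "{p, y} \<in> E"
    using assms(2,3) unfolding connected_in_def by (auto elim: converse_rtranclE)
  then show ?thesis
    using assms(1) unfolding degree_def by (subst card_gt_0_iff) auto
qed

lemma two_neighbours_if_degree_ge_2:
  assumes "finite E" "graph_edges V E" "2 \<le> degree E p"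
  shows "\<exists>a b. {p, a} \<in> E \<and> {p, b} \<in> E \<and> a \<noteq> b \<and> a \<noteq> p \<and> b \<noteq> p"
proof -
  have "\<not> card {e \<in> E. p \<in> e} \<le> Suc 0"
    using assms(3) by (simp add: degree_def)
  then obtain e1 e2 where "e1 \<in> E" "e2 \<in> E" "p \<in> e1" "p \<in> e2" "e1 \<noteq> e2"
    using assms(1) card_le_Suc0_iff_eq[of "{e \<in> E. p \<in> e}"] by auto
  moreover have "\<exists>a. e = {p, a}" if "e \<in> E" "p \<in> e" for e
    using that assms(2) unfolding graph_edges_def by (auto simp: insert_commute)
  ultimately obtain a b where "{p, a} \<in> E" "{p, b} \<in> E" "a \<noteq> b"
    by metis
  then show ?thesis
    using graph_edges_memD[OF assms(2)] by blast
qed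

section \<open>Rerouting a tree through a new Steiner point\<close>

definition star_reroute ::
  "('a \<Rightarrow> 'a) \<Rightarrow> 'a \<Rightarrow> 'a \<Rightarrow> 'a \<Rightarrow> 'a \<Rightarrow> 'a set set \<Rightarrow> 'a set set" where
  "star_reroute f p a b s E =
     insert {p, s} (insert {s, f a} (insert {s, f b} ((`) f ` (E - {{p, a}, {p, b}}))))"

lemma star_reroute_edges:
  assumes ge: "graph_edges V E" and pa: "{p, a} \<in> E" and pb: "{p, b} \<in> E" and "f p = p"
  shows "\<forall>e\<in>star_reroute f p a b s E. \<exists>x\<in>insert s (f ` V). \<exists>y\<in>insert s (f ` V). e = {x, y}"
proof
  let ?V1 = "insert s (f ` V)"
  have image_edge: "\<exists>x\<in>?V1. \<exists>y\<in>?V1. f ` e = {x, y}" if "e \<in> E" for e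
  proof -
    obtain x y where "e = {x, y}" "x \<in> V" "y \<in> V"
      using ge \<open>e \<in> E\<close> unfolding graph_edges_def by blast
    then show ?thesis
      by blast
  qed
  have new_vertices: "p \<in> ?V1" "s \<in> ?V1" "f a \<in> ?V1" "f b \<in> ?V1"
    using graph_edges_memD[OF ge pa] graph_edges_memD[OF ge pb] image_eqI[of p f p V] \<open>f p = p\<close>
    by auto
  fix e
  assume "e \<in> star_reroute f p a b s E"
  then consider "e \<in> {{p, s}, {s, f a}, {s, f b}}" | e0 where "e0 \<in> E" "e = f ` e0"
    unfolding star_reroute_def by blast
  then show "\<exists>x\<in>?V1. \<exists>y\<in>?V1. e = {x, y}"
    by cases (use new_vertices image_edge in blast)+
qed

lemma star_reroute_connected:
  assumes conn: "\<forall>u\<in>V. \<forall>v\<in>V. connected_in E u v" and "p \<in> V" and "f p = p"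
  shows "\<forall>u\<in>insert s (f ` V). \<forall>v\<in>insert s (f ` V). connected_in (star_reroute f p a b s E) u v"
proof -
  let ?E1 = "star_reroute f p a b s E"
  have star: "connected_in ?E1 p (f c)" if "c \<in> {a, b}" for c
    using that connected_in_trans[of ?E1 p s "f c"]
    by (auto simp: star_reroute_def intro: connected_in_edge)
  have "connected_in ?E1 (f x) (f y)" if "{x, y} \<in> E" for x y
  proof (cases "{x, y} \<in> E - {{p, a}, {p, b}}")
    case True
    then have "f ` {x, y} \<in> (`) f ` (E - {{p, a}, {p, b}})"
      by (rule imageI)
    then show ?thesis
      unfolding star_reroute_def by (intro connected_in_edge) simp
  next
    case False
    then have "{x, y} = {p, a} \<or> {x, y} = {p, b}"
      using \<open>{x, y} \<in> E\<close> by simp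
    then show ?thesis
      using \<open>f p = p\<close> star by (auto simp: doubleton_eq_iff intro: connected_in_sym)
  qed
  then have "connected_in ?E1 (f p) (f v)" if "v \<in> V" for v
    using connected_in_image[of E p v ?E1 f] conn \<open>p \<in> V\<close> that by blast
  moreover have "connected_in ?E1 p s"
    by (simp add: star_reroute_def connected_in_edge)
  ultimately have "connected_in ?E1 p w" if "w \<in> insert s (f ` V)" for w
    using that \<open>f p = p\<close> by auto
  then show ?thesis
    by (metis connected_in_trans connected_in_sym)
qed

lemma steiner_tree_within_star_reroute:
  assumes tree: "steiner_tree P V E" and "p \<in> P" and "{p, a} \<in> E" "{p, b} \<in> E"
    and fixes_P: "\<forall>q\<in>P. f q = q"
  shows "\<exists>E'. steiner_tree P (insert s (f ` V)) E' \<and> tree_cost E' \<le> tree_cost (star_reroute f p a b s E)"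
proof (rule steiner_tree_of_connected_graph)
  have "is_tree V E" and PV: "P \<subseteq> V"
    using tree by (auto simp: steiner_tree_def)
  then have "finite E" "finite V" "graph_edges V E" "\<forall>u\<in>V. \<forall>v\<in>V. connected_in E u v"
    using finite_edges_if_tree by (auto simp: is_tree_def)
  moreover have "f p = p" "p \<in> V"
    using fixes_P \<open>p \<in> P\<close> PV by auto
  ultimately show "finite (star_reroute f p a b s E)" "finite (insert s (f ` V))"
    "\<forall>e\<in>star_reroute f p a b s E. \<exists>x\<in>insert s (f ` V). \<exists>y\<in>insert s (f ` V). e = {x, y}"
    "\<forall>u\<in>insert s (f ` V). \<forall>v\<in>insert s (f ` V). connected_in (star_reroute f p a b s E) u v"
    using star_reroute_edges[of V E p a b f s] star_reroute_connected[of V E p f s a b] assms(3,4)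
    by (simp_all add: star_reroute_def)
  show "P \<subseteq> insert s (f ` V)"
    using fixes_P PV by force
qed simp

lemma tree_cost_star_reroute:
  assumes "finite E" "graph_edges V E" "{p, a} \<in> E" "{p, b} \<in> E" "a \<noteq> b"
    and lip: "\<forall>x y. dist (f x) (f y) \<le> dist x y"
  shows "tree_cost (star_reroute f p a b s E) + dist p a + dist p b
    \<le> tree_cost E + dist p s + dist s (f a) + dist s (f b)"
proof -
  define E0 where "E0 = E - {{p, a}, {p, b}}"
  have star: "tree_cost (star_reroute f p a b s E)
      \<le> dist p s + dist s (f a) + dist s (f b) + tree_cost ((`) f ` E0)"
    using \<open>finite E\<close> tree_cost_insert_le[of "insert {s, f a} (insert {s, f b} ((`) f ` E0))" p s]
      tree_cost_insert_le[of "insert {s, f b} ((`) f ` E0)" s "f a"]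
      tree_cost_insert_le[of "(`) f ` E0" s "f b"]
    unfolding star_reroute_def E0_def by simp
  have "\<forall>e\<in>E0. \<exists>x y. e = {x, y}"
    using assms(2) unfolding E0_def graph_edges_def by blast
  then have retract: "tree_cost ((`) f ` E0) \<le> tree_cost E0"
    using \<open>finite E\<close> lip unfolding E0_def by (intro tree_cost_image_le) simp_all
  have "tree_cost E0 = tree_cost E - dist p a - dist p b"
    unfolding E0_def using assms(1,3-5) by (rule tree_cost_remove_two_edges)
  then show ?thesis
    using star retract by linarith
qed

section \<open>A Steiner point for a non-obtuse angle\<close>

lemma norm_quarter_sum_diff_unit:
  fixes x y :: "'a::real_inner"
  assumes "norm x = 1" "norm y = 1"
  shows "(norm ((1/4) *\<^sub>R (x + y) - x))\<^sup>2 = 1 - 3 * (1 + x \<bullet> y) / 8"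
  using assms unfolding norm_eq_1
  by (simp add: power2_norm_eq_inner inner_diff_left inner_diff_right inner_add_left
      inner_add_right inner_commute algebra_simps) (simp add: field_simps)

lemma steiner_point_gain_unit:
  fixes e1 e2 :: "'a::real_inner"
  assumes e1: "norm e1 = 1" and e2: "norm e2 = 1" and non_obtuse: "0 \<le> e1 \<bullet> e2"
  defines "z \<equiv> (1/4) *\<^sub>R (e1 + e2)"
  shows "norm z + norm (z - e1) + norm (z - e2) < 2"
proof -
  define k where "k = 1 + e1 \<bullet> e2"
  have "e1 \<bullet> e2 \<le> 1"
    using norm_cauchy_schwarz[of e1 e2] e1 e2 by simp
  then have k: "1 \<le> k" "k \<le> 2"
    using non_obtuse by (simp_all add: k_def)
  have "(norm z)\<^sup>2 = k / 8"
    using e1 e2 unfolding norm_eq_1 z_def k_def power2_norm_eq_inner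
    by (simp add: inner_add_left inner_add_right inner_commute)
  also have "\<dots> < (3 * k / 8)\<^sup>2"
    using k by (simp add: power2_eq_square field_simps)
  finally have norm_z: "norm z < 3 * k / 8"
    by (rule power2_less_imp_less) (use k in simp)
  have diff_bound: "norm (z - e) \<le> 1 - 3 * k / 16" if "(norm (z - e))\<^sup>2 = 1 - 3 * k / 8" for e
  proof (rule power2_le_imp_le)
    have "(1 - 3 * k / 16)\<^sup>2 = 1 - 3 * k / 8 + (3 * k / 16)\<^sup>2"
      by (simp add: power2_eq_square field_simps)
    then show "(norm (z - e))\<^sup>2 \<le> (1 - 3 * k / 16)\<^sup>2"
      using that zero_le_power2[of "3 * k / 16"] by linarith
  qed (use k in simp)
  have diff_sq: "(norm (z - e1))\<^sup>2 = 1 - 3 * k / 8" "(norm (z - e2))\<^sup>2 = 1 - 3 * k / 8"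
    using norm_quarter_sum_diff_unit[OF e1 e2] norm_quarter_sum_diff_unit[OF e2 e1]
    by (simp_all add: z_def k_def add.commute inner_commute)
  show ?thesis
    using norm_z diff_bound[OF diff_sq(1)] diff_bound[OF diff_sq(2)] by linarith
qed

lemma norm_scaleR_sgn_diff:
  fixes w :: "'a::real_normed_vector"
  assumes "0 \<le> r" "r \<le> norm w"
  shows "norm (r *\<^sub>R sgn w - w) = norm w - r"
proof -
  have "r *\<^sub>R sgn w - w = (r / norm w - 1) *\<^sub>R w"
    by (simp add: sgn_div_norm divide_inverse algebra_simps)
  moreover have "\<bar>r / norm w - 1\<bar> * norm w = norm w - r"
    using assms by (cases "w = 0") (auto simp: field_simps abs_if)
  ultimately show ?thesis
    by simp
qed

lemma steiner_point_gain:
  fixes u v :: "'a::real_inner"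
  assumes "u \<noteq> 0" "v \<noteq> 0" "0 \<le> u \<bullet> v"
  shows "\<exists>z. norm z + norm (z - u) + norm (z - v) < norm u + norm v"
proof -
  define r where "r = min (norm u) (norm v)"
  define z where "z = (1/4) *\<^sub>R (sgn u + sgn v)"
  have r: "0 < r" "r \<le> norm u" "r \<le> norm v"
    using assms by (auto simp: r_def)
  have "0 \<le> sgn u \<bullet> sgn v"
    using assms by (simp add: sgn_div_norm)
  then have gain: "norm z + norm (z - sgn u) + norm (z - sgn v) < 2"
    using assms unfolding z_def by (intro steiner_point_gain_unit) (simp_all add: norm_sgn)
  have leg: "norm (r *\<^sub>R z - w) \<le> r * norm (z - sgn w) + (norm w - r)" if "r \<le> norm w" for w
  proof -
    have "r *\<^sub>R z - w = r *\<^sub>R (z - sgn w) + (r *\<^sub>R sgn w - w)"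
      by (simp add: algebra_simps)
    then show ?thesis
      using norm_triangle_ineq[of "r *\<^sub>R (z - sgn w)" "r *\<^sub>R sgn w - w"]
        norm_scaleR_sgn_diff[of r w] r(1) that by (simp only:) simp
  qed
  have "r * (norm z + norm (z - sgn u) + norm (z - sgn v)) < r * 2"
    using gain r(1) by simp
  then have "norm (r *\<^sub>R z) + norm (r *\<^sub>R z - u) + norm (r *\<^sub>R z - v) < norm u + norm v"
    using leg[OF r(2)] leg[OF r(3)] r(1) by (simp add: algebra_simps)
  then show ?thesis
    by blast
qed

lemma exists_steiner_point_shorter:
  fixes p x y :: "'a::real_inner"
  assumes "0 \<le> (x - p) \<bullet> (y - p)" "dist p x \<le> \<alpha>" "dist p y \<le> \<beta>" "0 < \<alpha>" "0 < \<beta>"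
  shows "\<exists>s. dist p s + dist s x + dist s y < \<alpha> + \<beta>"
proof (cases "x = p \<or> y = p")
  case True
  then have "dist p p + dist p x + dist p y < \<alpha> + \<beta>"
    using assms(2-5) by auto
  then show ?thesis
    by blast
next
  case False
  then obtain z where "norm z + norm (z - (x - p)) + norm (z - (y - p)) < norm (x - p) + norm (y - p)"
    using steiner_point_gain[of "x - p" "y - p"] assms(1) by auto
  then have "dist p (p + z) + dist (p + z) x + dist (p + z) y < dist p x + dist p y"
    by (simp add: dist_norm norm_minus_commute algebra_simps)
  then show ?thesis
    using assms(2,3) by (intro exI[of _ "p + z"]) linarith
qed

section \<open>Extreme points of a finite set are leaves\<close>

lemma inner_clamp_corner_nonneg:
  fixes a b p :: "'a::euclidean_space"
  assumes box: "\<And>i. i \<in> Basis \<Longrightarrow> a \<bullet> i \<le> b \<bullet> i"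
    and corner: "\<And>i. i \<in> Basis \<Longrightarrow> p \<bullet> i = a \<bullet> i \<or> p \<bullet> i = b \<bullet> i"
  shows "0 \<le> (clamp a b x - p) \<bullet> (clamp a b y - p)"
proof (subst euclidean_inner, rule sum_nonneg)
  fix i :: 'a
  assume i: "i \<in> Basis"
  have bounds: "a \<bullet> i \<le> clamp a b w \<bullet> i" "clamp a b w \<bullet> i \<le> b \<bullet> i" for w
    using clamp_in_interval[of a b w] box i unfolding mem_box by blast+
  show "0 \<le> ((clamp a b x - p) \<bullet> i) * ((clamp a b y - p) \<bullet> i)"
    unfolding inner_diff_left
  proof (cases "p \<bullet> i = a \<bullet> i")
    case True
    then show "0 \<le> (clamp a b x \<bullet> i - p \<bullet> i) * (clamp a b y \<bullet> i - p \<bullet> i)"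
      using bounds(1)[of x] bounds(1)[of y] by simp
  next
    case False
    then show "0 \<le> (clamp a b x \<bullet> i - p \<bullet> i) * (clamp a b y \<bullet> i - p \<bullet> i)"
      using corner[OF i] bounds(2)[of x] bounds(2)[of y] by (simp add: mult_nonpos_nonpos)
  qed
qed

lemma bounding_box_corner_retraction:
  fixes P :: "(real ^ 'n) set"
  assumes "finite P" "p \<in> P"
    and corner: "\<forall>i. p $ i = Max ((\<lambda>q. q $ i) ` P) \<or> p $ i = Min ((\<lambda>q. q $ i) ` P)"
  shows "\<exists>f. (\<forall>x y. dist (f x) (f y) \<le> dist x y) \<and> (\<forall>q\<in>P. f q = q)
    \<and> (\<forall>x y. 0 \<le> (f x - p) \<bullet> (f y - p))"
proof -
  define lo where "lo = (\<chi> i. Min ((\<lambda>q. q $ i) ` P))"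
  define hi where "hi = (\<chi> i. Max ((\<lambda>q. q $ i) ` P))"
  have P_box: "P \<subseteq> cbox lo hi"
    using assms(1) by (auto simp: mem_box_cart lo_def hi_def)
  then have box: "lo \<bullet> i \<le> hi \<bullet> i" if "i \<in> Basis" for i
    using \<open>p \<in> P\<close> that by (force simp: mem_box)
  have "p \<bullet> i = lo \<bullet> i \<or> p \<bullet> i = hi \<bullet> i" if "i \<in> Basis" for i
    using corner that by (auto simp: Basis_vec_def lo_def hi_def inner_axis)
  then have "0 \<le> (clamp lo hi x - p) \<bullet> (clamp lo hi y - p)" for x y
    using inner_clamp_corner_nonneg[OF box] by blast
  moreover have "clamp lo hi q = q" if "q \<in> P" for q
    using P_box that by auto
  ultimately show ?thesis
    using dist_clamps_le_dist_args by blast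
qed

lemma optimal_steiner_tree_degree_eq_1:
  fixes P :: "'a::real_inner set"
  assumes opt: "optimal_steiner_tree P V E" and "p \<in> P" "q \<in> P" "q \<noteq> p"
    and lip: "\<forall>x y. dist (f x) (f y) \<le> dist x y" and fixes_P: "\<forall>q\<in>P. f q = q"
    and non_obtuse: "\<forall>x y. 0 \<le> (f x - p) \<bullet> (f y - p)"
  shows "degree E p = 1"
proof -
  have tree: "steiner_tree P V E"
    and minimal: "\<And>V' E'. steiner_tree P V' E' \<Longrightarrow> tree_cost E \<le> tree_cost E'"
    using opt by (auto simp: optimal_steiner_tree_def)
  then have "is_tree V E" "P \<subseteq> V"
    by (auto simp: steiner_tree_def)
  then have finE: "finite E" and ge: "graph_edges V E" and "connected_in E p q"
    using finite_edges_if_tree \<open>p \<in> P\<close> \<open>q \<in> P\<close> unfolding is_tree_def by blast+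
  then have "0 < degree E p"
    using degree_pos_if_connected \<open>q \<noteq> p\<close> by metis
  moreover have "\<not> 2 \<le> degree E p"
  proof
    assume "2 \<le> degree E p"
    then obtain a b where ab: "{p, a} \<in> E" "{p, b} \<in> E" "a \<noteq> b" "a \<noteq> p" "b \<noteq> p"
      using two_neighbours_if_degree_ge_2[OF finE ge] by blast
    have "dist p (f c) \<le> dist p c" for c
      using lip fixes_P \<open>p \<in> P\<close> by metis
    then obtain s where "dist p s + dist s (f a) + dist s (f b) < dist p a + dist p b"
      using exists_steiner_point_shorter[where x = "f a" and y = "f b" and p = p
          and \<alpha> = "dist p a" and \<beta> = "dist p b"] non_obtuse ab(4,5) by auto
    moreover obtain E' where "steiner_tree P (insert s (f ` V)) E'"
      "tree_cost E' \<le> tree_cost (star_reroute f p a b s E)"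
      using steiner_tree_within_star_reroute[OF tree \<open>p \<in> P\<close> ab(1,2) fixes_P] by blast
    ultimately show False
      using minimal tree_cost_star_reroute[OF finE ge ab(1-3) lip, of s] by fastforce
  qed
  ultimately show ?thesis
    by linarith
qed

theorem mainTheorem4:
  fixes P :: "(real ^ 'd) set" and p :: "real ^ 'd"
  assumes "finite P" and "card P \<ge> 2" and "p \<in> P"
    and "\<forall>i. p $ i = Max ((\<lambda>q. q $ i) ` P) \<or> p $ i = Min ((\<lambda>q. q $ i) ` P)"
  shows "\<forall>V E. optimal_steiner_tree P V E \<longrightarrow> degree E p = 1"
proof (intro allI impI)
  fix V E
  assume "optimal_steiner_tree P V E"
  moreover obtain q where "q \<in> P" "q \<noteq> p"
    using assms(1-3) by (metis card_le_Suc0_iff_eq not_less_eq_eq numeral_2_eq_2)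
  moreover obtain f where "\<forall>x y. dist (f x) (f y) \<le> dist x y" "\<forall>q\<in>P. f q = q"
    "\<forall>x y. 0 \<le> (f x - p) \<bullet> (f y - p)"
    using bounding_box_corner_retraction[OF assms(1,3,4)] by blast
  ultimately show "degree E p = 1"
    using optimal_steiner_tree_degree_eq_1 \<open>p \<in> P\<close> by blast
qed

end
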